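(* $A_4(1,0,0,0,0)$ has a unique rational solution of Type A, namely $(f_0,f_1,f_2,f_3,f_4)=(t,0,0,0,0)$.
   Context: The $A_4^{(1)}$ Painlevé equation $A_4(\alpha_0,\dots,\alpha_4)$ is the system for five functions $f_0,\dots,f_4$ of $t$ (indices in $\mathbb{Z}/5\mathbb{Z}$, ${}'=d/dt$): $f_j'=f_j(f_{j+1}-f_{j+2}+f_{j+3}-f_{j+4})+\alpha_j$ ($j=0,\dots,4$), $f_0+\dots+f_4=t$. A rational solution is a tuple of rational functions satisfying it. A rational solution is of Type A if either (A(1)) for some $i$, $f_i$ has a pole at $t=\infty$ and the other $f_j$ are regular there, or (A(2)) for some $i$, $f_i,f_{i+1},f_{i+3}$ have a pole at $t=\infty$ and $f_{i+2},f_{i+4}$ are regular there. *)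

theory Defs
  imports "HOL-Computational_Algebra.Polynomial" "HOL-Computational_Algebra.Fraction_Field"
begin

type_synonym rfun = "complex poly fract"

definition rvar :: rfun where "rvar = Fract [:0, 1:] 1"

definition rconst :: "complex \<Rightarrow> rfun" where "rconst c = Fract [:c:] 1"

text \<open>Derivative of a rational function via the quotient rule (independent of the representative).\<close>
definition rderiv :: "rfun \<Rightarrow> rfun" where
  "rderiv f = (SOME g. \<exists>p q. q \<noteq> 0 \<and> f = Fract p q \<and>
      g = Fract (pderiv p * q - p * pderiv q) (q * q))"

definition pole_at_inf :: "rfun \<Rightarrow> bool" where
  "pole_at_inf f \<longleftrightarrow> (\<exists>p q. q \<noteq> 0 \<and> f = Fract p q \<and> degree q < degree p)"

text \<open>Indices are taken modulo 5; only f 0, ..., f 4 matter.\<close>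
definition A4_solution :: "(nat \<Rightarrow> complex) \<Rightarrow> (nat \<Rightarrow> rfun) \<Rightarrow> bool" where
  "A4_solution \<alpha> f \<longleftrightarrow>
     (\<forall>j<5. rderiv (f j) =
        f j * (f ((j+1) mod 5) - f ((j+2) mod 5) + f ((j+3) mod 5) - f ((j+4) mod 5))
        + rconst (\<alpha> j)) \<and>
     f 0 + f 1 + f 2 + f 3 + f 4 = rvar"

definition typeA :: "(nat \<Rightarrow> rfun) \<Rightarrow> bool" where
  "typeA f \<longleftrightarrow>
     (\<exists>i<5. pole_at_inf (f i) \<and> (\<forall>j<5. j \<noteq> i \<longrightarrow> \<not> pole_at_inf (f j))) \<or>
     (\<exists>i<5. pole_at_inf (f i) \<and> pole_at_inf (f ((i+1) mod 5)) \<and> pole_at_inf (f ((i+3) mod 5))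
        \<and> \<not> pole_at_inf (f ((i+2) mod 5)) \<and> \<not> pole_at_inf (f ((i+4) mod 5)))"

end

theory Submission
  imports
    Defs
    "HOL-Computational_Algebra.Polynomial_Factorial"
    "HOL-Computational_Algebra.Field_as_Ring"
begin

text \<open>
  A nonzero rational function has a logarithmic derivative regular at infinity. Hence whenever
  the bracket in \<open>f\<^sub>j' = f\<^sub>j (\<dots>)\<close> has a pole at infinity, \<open>f\<^sub>j = 0\<close>. In each Type A pattern
  this kills enough components (for A(2) after first noting that the brackets of the irregular
  components are regular, which forces certain pairs of poles to cancel) that some irregular
  \<open>f\<^sub>i\<close> ends up satisfying a Riccati equation \<open>f\<^sub>i' = \<plusminus>f\<^sub>i (t - f\<^sub>i)\<close>. Writing \<open>f\<^sub>i = p/q\<close> in lowest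
  terms, the equation gives \<open>p dvd p'\<close>, so \<open>p\<close> is constant and \<open>f\<^sub>i\<close> is regular after all.
  The only escape is a single pole at \<open>f\<^sub>0\<close>, where all other components vanish and \<open>f\<^sub>0 = t\<close>.
\<close>

lemma quotient_rule_respects_fractrel:
  fixes p q p' q' :: "'a :: idom poly"
  assumes "p * q' = p' * q"
  shows "(pderiv p * q - p * pderiv q) * (q' * q') = (pderiv p' * q' - p' * pderiv q') * (q * q)"
proof -
  have "pderiv (p * q') = pderiv (p' * q)" using assms by simp
  then have "p * pderiv q' + q' * pderiv p = p' * pderiv q + q * pderiv p'"
    by (simp add: pderiv_mult)
  with assms show ?thesis by algebra
qed

lemma rderiv_Fract:
  assumes "q \<noteq> 0"
  shows "rderiv (Fract p q) = Fract (pderiv p * q - p * pderiv q) (q * q)"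
proof -
  have "\<exists>p' q'. q' \<noteq> 0 \<and> Fract p q = Fract p' q' \<and>
      rderiv (Fract p q) = Fract (pderiv p' * q' - p' * pderiv q') (q' * q')"
    unfolding rderiv_def
    by (rule someI[of _ "Fract (pderiv p * q - p * pderiv q) (q * q)"]) (use assms in blast)
  then obtain p' q' where "q' \<noteq> 0" "Fract p q = Fract p' q'"
    and "rderiv (Fract p q) = Fract (pderiv p' * q' - p' * pderiv q') (q' * q')" by blast
  with assms show ?thesis
    by (simp add: eq_fract quotient_rule_respects_fractrel)
qed

lemma rderiv_add: "rderiv (x + y) = rderiv x + rderiv y"
proof -
  obtain p q r s where "x = Fract p q" "q \<noteq> 0" "y = Fract r s" "s \<noteq> 0"
    by (metis Fract_cases)
  then show ?thesis
    by (simp add: rderiv_Fract eq_fract pderiv_add pderiv_mult pderiv_diff algebra_simps)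
qed

lemma rderiv_0 [simp]: "rderiv 0 = 0"
  by (simp add: Zero_fract_def rderiv_Fract)

lemma rderiv_rvar [simp]: "rderiv rvar = 1"
  by (simp add: rvar_def rderiv_Fract One_fract_def pderiv_pCons pCons_one)

lemma rconst_0 [simp]: "rconst 0 = 0"
  by (simp add: rconst_def Zero_fract_def)

lemma rconst_1 [simp]: "rconst 1 = 1"
  by (simp add: rconst_def One_fract_def pCons_one)

lemma rconst_uminus [simp]: "rconst (- c) = - rconst c"
  by (simp add: rconst_def)

definition regular_at_inf :: "rfun \<Rightarrow> bool" where
  "regular_at_inf f \<longleftrightarrow> (\<exists>p q. q \<noteq> 0 \<and> f = Fract p q \<and> degree p \<le> degree q)"

lemma regular_at_inf_Fract: "q \<noteq> 0 \<Longrightarrow> degree p \<le> degree q \<Longrightarrow> regular_at_inf (Fract p q)"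
  unfolding regular_at_inf_def by blast

lemma regular_at_inf_0 [simp]: "regular_at_inf 0"
  by (metis Zero_fract_def regular_at_inf_Fract degree_0 le0 one_neq_zero)

lemma regular_at_inf_add:
  assumes "regular_at_inf f" "regular_at_inf g"
  shows "regular_at_inf (f + g)"
proof -
  obtain p q r s where f: "q \<noteq> 0" "f = Fract p q" "degree p \<le> degree q"
    and g: "s \<noteq> 0" "g = Fract r s" "degree r \<le> degree s"
    using assms unfolding regular_at_inf_def by blast
  have "degree (p * s + r * q) \<le> degree (q * s)"
    using degree_add_le[of "p * s" "degree q + degree s" "r * q"]
      degree_mult_le[of p s] degree_mult_le[of r q] degree_mult_eq[of q s] f g by simp
  with f g show ?thesis by (simp add: regular_at_inf_Fract)
qed

lemma regular_at_inf_uminus_iff [simp]: "regular_at_inf (- f) \<longleftrightarrow> regular_at_inf f"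
proof -
  have "regular_at_inf (- f)" if "regular_at_inf f" for f
    using that unfolding regular_at_inf_def by (metis degree_minus minus_fract)
  from this[of f] this[of "- f"] show ?thesis by auto
qed

lemma regular_at_inf_diff:
  "regular_at_inf f \<Longrightarrow> regular_at_inf g \<Longrightarrow> regular_at_inf (f - g)"
  by (metis diff_conv_add_uminus regular_at_inf_add regular_at_inf_uminus_iff)

lemma regular_at_inf_add_iff_left [simp]:
  "regular_at_inf g \<Longrightarrow> regular_at_inf (f + g) \<longleftrightarrow> regular_at_inf f"
  by (metis add_diff_cancel regular_at_inf_add regular_at_inf_diff)

lemma regular_at_inf_add_iff_right [simp]:
  "regular_at_inf f \<Longrightarrow> regular_at_inf (f + g) \<longleftrightarrow> regular_at_inf g"
  by (metis add.commute regular_at_inf_add_iff_left)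

lemma regular_at_inf_diff_iff_left [simp]:
  "regular_at_inf g \<Longrightarrow> regular_at_inf (f - g) \<longleftrightarrow> regular_at_inf f"
  by (metis diff_conv_add_uminus regular_at_inf_add_iff_left regular_at_inf_uminus_iff)

lemma regular_at_inf_diff_iff_right [simp]:
  "regular_at_inf f \<Longrightarrow> regular_at_inf (f - g) \<longleftrightarrow> regular_at_inf g"
  by (metis diff_conv_add_uminus regular_at_inf_add_iff_right regular_at_inf_uminus_iff)

lemma pole_at_inf_iff_not_regular: "pole_at_inf f \<longleftrightarrow> \<not> regular_at_inf f"
proof
  assume "pole_at_inf f"
  then obtain p q where f: "q \<noteq> 0" "f = Fract p q" "degree q < degree p"
    unfolding pole_at_inf_def by blast
  show "\<not> regular_at_inf f"
  proof
    assume "regular_at_inf f"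
    then obtain r s where g: "s \<noteq> 0" "f = Fract r s" "degree r \<le> degree s"
      unfolding regular_at_inf_def by blast
    with f have eq: "p * s = r * q" by (simp add: eq_fract)
    have "p \<noteq> 0" using f by auto
    with eq f g have "degree p + degree s = degree r + degree q"
      by (metis degree_mult_eq mult_eq_0_iff)
    with f g show False by linarith
  qed
next
  assume "\<not> regular_at_inf f"
  moreover obtain p q where "f = Fract p q" "q \<noteq> 0" by (cases f)
  ultimately show "pole_at_inf f"
    unfolding pole_at_inf_def by (metis not_le regular_at_inf_Fract)
qed

lemma regular_at_inf_log_deriv:
  assumes "g \<noteq> 0" and g': "rderiv g = g * h"
  shows "regular_at_inf h"
proof -
  obtain p q where g: "g = Fract p q" "q \<noteq> 0" by (cases g)
  obtain r s where h: "h = Fract r s" "s \<noteq> 0" by (cases h)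
  have "p \<noteq> 0" using g \<open>g \<noteq> 0\<close> by (auto simp: fract_collapse)
  show ?thesis
  proof (cases "r = 0")
    case True
    with h show ?thesis by (simp add: regular_at_inf_Fract)
  next
    case False
    define N where "N = pderiv p * q - p * pderiv q"
    from g' g h have N: "N * (q * s) = (p * r) * (q * q)"
      by (simp add: rderiv_Fract N_def eq_fract)
    with \<open>p \<noteq> 0\<close> \<open>r \<noteq> 0\<close> g h have "N \<noteq> 0" by auto
    have "degree (pderiv p * q) \<le> degree p + degree q"
      using degree_mult_le[of "pderiv p" q] degree_pderiv[of p] by linarith
    moreover have "degree (p * pderiv q) \<le> degree p + degree q"
      using degree_mult_le[of p "pderiv q"] degree_pderiv[of q] by linarith
    ultimately have "degree N \<le> degree p + degree q"
      unfolding N_def by (rule degree_diff_le)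
    moreover have "degree N + (degree q + degree s) = (degree p + degree r) + (degree q + degree q)"
      using N \<open>N \<noteq> 0\<close> \<open>p \<noteq> 0\<close> \<open>r \<noteq> 0\<close> g h by (metis degree_mult_eq mult_eq_0_iff)
    ultimately have "degree r \<le> degree s" by linarith
    with h show ?thesis by (simp add: regular_at_inf_Fract)
  qed
qed

lemma regular_at_inf_log_deriv_of_irregular:
  "rderiv g = g * h \<Longrightarrow> \<not> regular_at_inf g \<Longrightarrow> regular_at_inf h"
  using regular_at_inf_0 regular_at_inf_log_deriv by metis

lemma log_deriv_irregular_imp_zero:
  "rderiv g = g * h \<Longrightarrow> \<not> regular_at_inf h \<Longrightarrow> g = 0"
  using regular_at_inf_log_deriv by blast

lemma riccati_solution_regular_at_inf:
  assumes h': "rderiv h = rconst c * (h * (rvar - h))"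
  shows "regular_at_inf h"
proof -
  define p q where "p = fst (quot_of_fract h)" and "q = snd (quot_of_fract h)"
  have h: "h = Fract p q" "q \<noteq> 0" "coprime p q"
    unfolding p_def q_def by (simp_all add: coprime_quot_of_fract)
  from h' h have "pderiv p * q - p * pderiv q = [:c:] * (p * ([:0, 1:] * q - p))"
    by (simp add: rderiv_Fract rvar_def rconst_def eq_fract flip: mult_smult_left)
  then have "pderiv p * q = p * (pderiv q + [:c:] * ([:0, 1:] * q - p))"
    by (simp add: algebra_simps)
  with h have "p dvd pderiv p"
    by (metis coprime_dvd_mult_left_iff dvd_triv_left)
  have "degree p = 0"
  proof (rule ccontr)
    assume "degree p \<noteq> 0"
    then have "pderiv p \<noteq> 0" "degree (pderiv p) < degree p"
      by (simp_all add: pderiv_eq_0_iff degree_pderiv)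
    with \<open>p dvd pderiv p\<close> show False
      using dvd_imp_degree_le by fastforce
  qed
  with h show ?thesis by (simp add: regular_at_inf_Fract)
qed

locale A4_10000 =
  fixes f :: "nat \<Rightarrow> rfun"
  assumes eq1: "rderiv (f 1) = f 1 * (f 2 - f 3 + f 4 - f 0)"
    and eq2: "rderiv (f 2) = f 2 * (f 3 - f 4 + f 0 - f 1)"
    and eq3: "rderiv (f 3) = f 3 * (f 4 - f 0 + f 1 - f 2)"
    and eq4: "rderiv (f 4) = f 4 * (f 0 - f 1 + f 2 - f 3)"
    and sum: "f 0 + f 1 + f 2 + f 3 + f 4 = rvar"
begin

lemma single_pole_at_0:
  assumes "\<not> regular_at_inf (f 0)"
    and "regular_at_inf (f 1)" "regular_at_inf (f 2)" "regular_at_inf (f 3)" "regular_at_inf (f 4)"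
  shows "f 1 = 0 \<and> f 2 = 0 \<and> f 3 = 0 \<and> f 4 = 0"
proof (intro conjI)
  show "f 1 = 0" using eq1 by (rule log_deriv_irregular_imp_zero) (use assms in simp)
  show "f 2 = 0" using eq2 by (rule log_deriv_irregular_imp_zero) (use assms in simp)
  show "f 3 = 0" using eq3 by (rule log_deriv_irregular_imp_zero) (use assms in simp)
  show "f 4 = 0" using eq4 by (rule log_deriv_irregular_imp_zero) (use assms in simp)
qed

lemma no_single_pole_at_1:
  assumes p: "\<not> regular_at_inf (f 1)"
    and r: "regular_at_inf (f 0)" "regular_at_inf (f 2)" "regular_at_inf (f 3)" "regular_at_inf (f 4)"
  shows False
proof -
  have z2: "f 2 = 0" using eq2 by (rule log_deriv_irregular_imp_zero) (use p r in simp)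
  have z3: "f 3 = 0" using eq3 by (rule log_deriv_irregular_imp_zero) (use p r in simp)
  have z4: "f 4 = 0" using eq4 by (rule log_deriv_irregular_imp_zero) (use p r in simp)
  have "rderiv (f 1) = - (f 1 * (rvar - f 1))"
    using eq1 sum z2 z3 z4 by algebra
  with p show False using riccati_solution_regular_at_inf[of "f 1" "- 1"] by simp
qed

lemma no_single_pole_at_2:
  assumes p: "\<not> regular_at_inf (f 2)"
    and r: "regular_at_inf (f 0)" "regular_at_inf (f 1)" "regular_at_inf (f 3)" "regular_at_inf (f 4)"
  shows False
proof -
  have z1: "f 1 = 0" using eq1 by (rule log_deriv_irregular_imp_zero) (use p r in simp)
  have z3: "f 3 = 0" using eq3 by (rule log_deriv_irregular_imp_zero) (use p r in simp)
  have z4: "f 4 = 0" using eq4 by (rule log_deriv_irregular_imp_zero) (use p r in simp)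
  have "rderiv (f 2) = f 2 * (rvar - f 2)"
    using eq2 sum z1 z3 z4 by algebra
  with p show False using riccati_solution_regular_at_inf[of "f 2" 1] by simp
qed

lemma no_single_pole_at_3:
  assumes p: "\<not> regular_at_inf (f 3)"
    and r: "regular_at_inf (f 0)" "regular_at_inf (f 1)" "regular_at_inf (f 2)" "regular_at_inf (f 4)"
  shows False
proof -
  have z1: "f 1 = 0" using eq1 by (rule log_deriv_irregular_imp_zero) (use p r in simp)
  have z2: "f 2 = 0" using eq2 by (rule log_deriv_irregular_imp_zero) (use p r in simp)
  have z4: "f 4 = 0" using eq4 by (rule log_deriv_irregular_imp_zero) (use p r in simp)
  have "rderiv (f 3) = - (f 3 * (rvar - f 3))"
    using eq3 sum z1 z2 z4 by algebra
  with p show False using riccati_solution_regular_at_inf[of "f 3" "- 1"] by simp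
qed

lemma no_single_pole_at_4:
  assumes p: "\<not> regular_at_inf (f 4)"
    and r: "regular_at_inf (f 0)" "regular_at_inf (f 1)" "regular_at_inf (f 2)" "regular_at_inf (f 3)"
  shows False
proof -
  have z1: "f 1 = 0" using eq1 by (rule log_deriv_irregular_imp_zero) (use p r in simp)
  have z2: "f 2 = 0" using eq2 by (rule log_deriv_irregular_imp_zero) (use p r in simp)
  have z3: "f 3 = 0" using eq3 by (rule log_deriv_irregular_imp_zero) (use p r in simp)
  have "rderiv (f 4) = f 4 * (rvar - f 4)"
    using eq4 sum z1 z2 z3 by algebra
  with p show False using riccati_solution_regular_at_inf[of "f 4" 1] by simp
qed

lemma no_poles_at_0_1_3:
  assumes p: "\<not> regular_at_inf (f 0)" "\<not> regular_at_inf (f 1)" "\<not> regular_at_inf (f 3)"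
    and r: "regular_at_inf (f 2)" "regular_at_inf (f 4)"
  shows False
proof -
  have "regular_at_inf (f 2 - f 3 + f 4 - f 0)"
    using eq1 p(2) by (rule regular_at_inf_log_deriv_of_irregular)
  moreover have "f 0 + f 3 = f 2 + f 4 - (f 2 - f 3 + f 4 - f 0)" by simp
  ultimately have r03: "regular_at_inf (f 0 + f 3)"
    using r by (metis regular_at_inf_add regular_at_inf_diff)
  have "regular_at_inf (f 4 - f 0 + f 1 - f 2)"
    using eq3 p(3) by (rule regular_at_inf_log_deriv_of_irregular)
  moreover have "f 1 - f 0 = (f 4 - f 0 + f 1 - f 2) - f 4 + f 2" by simp
  ultimately have r10: "regular_at_inf (f 1 - f 0)"
    using r by (metis regular_at_inf_add regular_at_inf_diff)
  have "\<not> regular_at_inf ((f 0 + f 3) - f 4 - f 1)" using r03 r p by simp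
  moreover have "(f 0 + f 3) - f 4 - f 1 = f 3 - f 4 + f 0 - f 1" by simp
  ultimately have z2: "f 2 = 0" using eq2 by (metis log_deriv_irregular_imp_zero)
  have "\<not> regular_at_inf (f 2 - (f 1 - f 0) - f 3)" using r10 r p by simp
  moreover have "f 2 - (f 1 - f 0) - f 3 = f 0 - f 1 + f 2 - f 3" by simp
  ultimately have z4: "f 4 = 0" using eq4 by (metis log_deriv_irregular_imp_zero)
  have "rderiv (f 1) = - (f 1 * (rvar - f 1))"
    using eq1 sum z2 z4 by algebra
  with p(2) show False using riccati_solution_regular_at_inf[of "f 1" "- 1"] by simp
qed

lemma no_poles_at_1_2_4:
  assumes p: "\<not> regular_at_inf (f 1)" "\<not> regular_at_inf (f 2)" "\<not> regular_at_inf (f 4)"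
    and r: "regular_at_inf (f 0)" "regular_at_inf (f 3)"
  shows False
proof -
  have "regular_at_inf (f 3 - f 4 + f 0 - f 1)"
    using eq2 p(2) by (rule regular_at_inf_log_deriv_of_irregular)
  moreover have "f 1 + f 4 = f 3 + f 0 - (f 3 - f 4 + f 0 - f 1)" by simp
  ultimately have r14: "regular_at_inf (f 1 + f 4)"
    using r by (metis regular_at_inf_add regular_at_inf_diff)
  have "\<not> regular_at_inf ((f 1 + f 4) - f 0 - f 2)" using r14 r p by simp
  moreover have "(f 1 + f 4) - f 0 - f 2 = f 4 - f 0 + f 1 - f 2" by simp
  ultimately have z3: "f 3 = 0" using eq3 by (metis log_deriv_irregular_imp_zero)
  have "rderiv (f 2 + f 4) = (f 2 + f 4) * (f 0 - f 1)"
    using rderiv_add[of "f 2" "f 4"] eq2 eq4 z3 by algebra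
  moreover have "\<not> regular_at_inf (f 0 - f 1)" using r p by simp
  ultimately have z24: "f 2 + f 4 = 0" by (rule log_deriv_irregular_imp_zero)
  have "rderiv (f 1) = - (f 1 * (rvar - f 1))"
    using eq1 sum z3 z24 by algebra
  with p(1) show False using riccati_solution_regular_at_inf[of "f 1" "- 1"] by simp
qed

lemma no_poles_at_2_3_0:
  assumes p: "\<not> regular_at_inf (f 2)" "\<not> regular_at_inf (f 3)" "\<not> regular_at_inf (f 0)"
    and r: "regular_at_inf (f 4)" "regular_at_inf (f 1)"
  shows False
proof -
  have "regular_at_inf (f 3 - f 4 + f 0 - f 1)"
    using eq2 p(1) by (rule regular_at_inf_log_deriv_of_irregular)
  moreover have "f 0 + f 3 = (f 3 - f 4 + f 0 - f 1) + f 4 + f 1" by simp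
  ultimately have r03: "regular_at_inf (f 0 + f 3)"
    using r by (metis regular_at_inf_add)
  have "regular_at_inf (f 4 - f 0 + f 1 - f 2)"
    using eq3 p(2) by (rule regular_at_inf_log_deriv_of_irregular)
  moreover have "f 0 + f 2 = f 4 + f 1 - (f 4 - f 0 + f 1 - f 2)" by simp
  ultimately have r02: "regular_at_inf (f 0 + f 2)"
    using r by (metis regular_at_inf_add regular_at_inf_diff)
  have "\<not> regular_at_inf (f 2 + f 4 - (f 0 + f 3))" using r03 r p by simp
  moreover have "f 2 + f 4 - (f 0 + f 3) = f 2 - f 3 + f 4 - f 0" by simp
  ultimately have z1: "f 1 = 0" using eq1 by (metis log_deriv_irregular_imp_zero)
  have "\<not> regular_at_inf ((f 0 + f 2) - f 1 - f 3)" using r02 r p by simp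
  moreover have "(f 0 + f 2) - f 1 - f 3 = f 0 - f 1 + f 2 - f 3" by simp
  ultimately have z4: "f 4 = 0" using eq4 by (metis log_deriv_irregular_imp_zero)
  have "rderiv (f 2) = f 2 * (rvar - f 2)"
    using eq2 sum z1 z4 by algebra
  with p(1) show False using riccati_solution_regular_at_inf[of "f 2" 1] by simp
qed

lemma no_poles_at_3_4_1:
  assumes p: "\<not> regular_at_inf (f 3)" "\<not> regular_at_inf (f 4)" "\<not> regular_at_inf (f 1)"
    and r: "regular_at_inf (f 0)" "regular_at_inf (f 2)"
  shows False
proof -
  have "regular_at_inf (f 2 - f 3 + f 4 - f 0)"
    using eq1 p(3) by (rule regular_at_inf_log_deriv_of_irregular)
  moreover have "f 4 - f 3 = (f 2 - f 3 + f 4 - f 0) - f 2 + f 0" by simp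
  ultimately have r43: "regular_at_inf (f 4 - f 3)"
    using r by (metis regular_at_inf_add regular_at_inf_diff)
  have "\<not> regular_at_inf (f 0 - (f 4 - f 3) - f 1)" using r43 r p by simp
  moreover have "f 0 - (f 4 - f 3) - f 1 = f 3 - f 4 + f 0 - f 1" by simp
  ultimately have z2: "f 2 = 0" using eq2 by (metis log_deriv_irregular_imp_zero)
  have "rderiv (f 1 + f 3) = (f 1 + f 3) * (f 4 - f 0)"
    using rderiv_add[of "f 1" "f 3"] eq1 eq3 z2 by algebra
  moreover have "\<not> regular_at_inf (f 4 - f 0)" using r p by simp
  ultimately have z13: "f 1 + f 3 = 0" by (rule log_deriv_irregular_imp_zero)
  have "rderiv (f 4) = f 4 * (rvar - f 4)"
    using eq4 sum z2 z13 by algebra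
  with p(2) show False using riccati_solution_regular_at_inf[of "f 4" 1] by simp
qed

lemma no_poles_at_4_0_2:
  assumes p: "\<not> regular_at_inf (f 4)" "\<not> regular_at_inf (f 0)" "\<not> regular_at_inf (f 2)"
    and r: "regular_at_inf (f 1)" "regular_at_inf (f 3)"
  shows False
proof -
  have "regular_at_inf (f 3 - f 4 + f 0 - f 1)"
    using eq2 p(3) by (rule regular_at_inf_log_deriv_of_irregular)
  moreover have "f 0 - f 4 = (f 3 - f 4 + f 0 - f 1) - f 3 + f 1" by simp
  ultimately have r04: "regular_at_inf (f 0 - f 4)"
    using r by (metis regular_at_inf_add regular_at_inf_diff)
  have "\<not> regular_at_inf (f 2 - f 3 - (f 0 - f 4))" using r04 r p by simp
  moreover have "f 2 - f 3 - (f 0 - f 4) = f 2 - f 3 + f 4 - f 0" by simp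
  ultimately have z1: "f 1 = 0" using eq1 by (metis log_deriv_irregular_imp_zero)
  have "\<not> regular_at_inf (f 1 - (f 0 - f 4) - f 2)" using r04 r p by simp
  moreover have "f 1 - (f 0 - f 4) - f 2 = f 4 - f 0 + f 1 - f 2" by simp
  ultimately have z3: "f 3 = 0" using eq3 by (metis log_deriv_irregular_imp_zero)
  have "rderiv (f 4) = f 4 * (rvar - f 4)"
    using eq4 sum z1 z3 by algebra
  with p(1) show False using riccati_solution_regular_at_inf[of "f 4" 1] by simp
qed

lemma typeA_imp_vanishing:
  assumes "typeA f"
  shows "f 1 = 0 \<and> f 2 = 0 \<and> f 3 = 0 \<and> f 4 = 0"
  using assms unfolding typeA_def pole_at_inf_iff_not_regular not_not
proof (elim disjE exE conjE)
  fix i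
  assume i: "i < 5" "\<not> regular_at_inf (f i)"
    and reg: "\<forall>j<5. j \<noteq> i \<longrightarrow> regular_at_inf (f j)"
  have "i = 0 \<or> i = 1 \<or> i = 2 \<or> i = 3 \<or> i = 4" using i(1) by linarith
  then show ?thesis
    using i(2) reg single_pole_at_0 no_single_pole_at_1 no_single_pole_at_2 no_single_pole_at_3
      no_single_pole_at_4 by auto
next
  fix i
  assume "i < 5" "\<not> regular_at_inf (f i)" "\<not> regular_at_inf (f ((i + 1) mod 5))"
    "\<not> regular_at_inf (f ((i + 3) mod 5))" "regular_at_inf (f ((i + 2) mod 5))"
    "regular_at_inf (f ((i + 4) mod 5))"
  moreover have "i = 0 \<or> i = 1 \<or> i = 2 \<or> i = 3 \<or> i = 4" using \<open>i < 5\<close> by linarith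
  ultimately show ?thesis
    using no_poles_at_0_1_3 no_poles_at_1_2_4 no_poles_at_2_3_0 no_poles_at_3_4_1 no_poles_at_4_0_2
    by (auto simp flip: numeral_2_eq_2)
qed

end

lemma A4_10000_of_A4_solution:
  assumes "A4_solution (\<lambda>j. if j = 0 then 1 else 0) f"
  shows "A4_10000 f"
proof
  from assms have eqs: "\<forall>j<5. rderiv (f j) =
      f j * (f ((j+1) mod 5) - f ((j+2) mod 5) + f ((j+3) mod 5) - f ((j+4) mod 5))
      + rconst (if j = 0 then 1 else 0)"
    and sum: "f 0 + f 1 + f 2 + f 3 + f 4 = rvar"
    unfolding A4_solution_def by blast+
  show "f 0 + f 1 + f 2 + f 3 + f 4 = rvar" by (fact sum)
  show "rderiv (f 1) = f 1 * (f 2 - f 3 + f 4 - f 0)"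
    using eqs[rule_format, of 1] by (simp flip: numeral_2_eq_2)
  show "rderiv (f 2) = f 2 * (f 3 - f 4 + f 0 - f 1)"
    using eqs[rule_format, of 2] by (simp flip: numeral_2_eq_2)
  show "rderiv (f 3) = f 3 * (f 4 - f 0 + f 1 - f 2)"
    using eqs[rule_format, of 3] by (simp flip: numeral_2_eq_2)
  show "rderiv (f 4) = f 4 * (f 0 - f 1 + f 2 - f 3)"
    using eqs[rule_format, of 4] by (simp flip: numeral_2_eq_2)
qed

lemma pole_at_inf_rvar: "pole_at_inf rvar"
  unfolding pole_at_inf_def rvar_def by (intro exI[of _ "[:0, 1:]"] exI[of _ 1]) simp

lemma A4_solution_rvar:
  assumes "f 0 = rvar" "f 1 = 0" "f 2 = 0" "f 3 = 0" "f 4 = 0"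
  shows "A4_solution (\<lambda>j. if j = 0 then 1 else 0) f"
  unfolding A4_solution_def
proof (intro conjI allI impI)
  fix j :: nat
  assume "j < 5"
  then consider "j = 0" | "j = 1" | "j = 2" | "j = 3" | "j = 4" by linarith
  then show "rderiv (f j) =
      f j * (f ((j+1) mod 5) - f ((j+2) mod 5) + f ((j+3) mod 5) - f ((j+4) mod 5))
      + rconst (if j = 0 then 1 else 0)"
    using assms by cases (simp_all flip: numeral_2_eq_2)
qed (use assms in simp)

lemma typeA_rvar:
  assumes "f 0 = rvar" "f 1 = 0" "f 2 = 0" "f 3 = 0" "f 4 = 0"
  shows "typeA f"
proof -
  have "pole_at_inf (f 0)" using assms pole_at_inf_rvar by simp
  moreover have "\<not> pole_at_inf (f j)" if "j < 5" "j \<noteq> 0" for j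
  proof -
    from that consider "j = 1" | "j = 2" | "j = 3" | "j = 4" by linarith
    then show ?thesis using assms by cases (simp_all add: pole_at_inf_iff_not_regular)
  qed
  ultimately show ?thesis unfolding typeA_def by (intro disjI1 exI[of _ 0]) auto
qed

theorem lemma3p4:
  fixes f :: "nat \<Rightarrow> rfun"
  shows "(A4_solution (\<lambda>j. if j = 0 then 1 else 0) f \<and> typeA f) \<longleftrightarrow>
         (f 0 = rvar \<and> f 1 = 0 \<and> f 2 = 0 \<and> f 3 = 0 \<and> f 4 = 0)"
proof
  assume H: "A4_solution (\<lambda>j. if j = 0 then 1 else 0) f \<and> typeA f"
  then interpret A4_10000 f by (intro A4_10000_of_A4_solution) simp
  from H have "f 1 = 0 \<and> f 2 = 0 \<and> f 3 = 0 \<and> f 4 = 0" by (intro typeA_imp_vanishing) simp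
  with sum show "f 0 = rvar \<and> f 1 = 0 \<and> f 2 = 0 \<and> f 3 = 0 \<and> f 4 = 0" by simp
next
  assume "f 0 = rvar \<and> f 1 = 0 \<and> f 2 = 0 \<and> f 3 = 0 \<and> f 4 = 0"
  then show "A4_solution (\<lambda>j. if j = 0 then 1 else 0) f \<and> typeA f"
    using A4_solution_rvar typeA_rvar by simp
qed

end
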